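(* Let $m,d,n\ge1$, $p,q,\lambda>0$, $g(\alpha)=\|\alpha/\lambda\|_p^q$, and let $X=[x_1,\dots,x_n]\in\mathbb{R}^{m\times n}$ be fixed. For $D\in\mathbb{R}^{m\times d}$ define $$L_X(D)=\inf_{\epsilon>0}\sup_{A\in\mathfrak{A}_\epsilon(X,D)}\tfrac1n\|(X-DA)A^\top\|_\star,\qquad C_X(D)=\inf_{\epsilon>0}\sup_{A\in\mathfrak{A}_\epsilon(X,D)}\tfrac{1}{2n}\sum_{i=1}^n\|\alpha_i\|_1^2 .$$ Then there exist finite constants $L_X$ and $C_X$, not depending on $D$, such that $L_X(D)\le L_X$ and $C_X(D)\le C_X$ for every $D\in\mathbb{R}^{m\times d}$.
   Context: For $x\in\mathbb{R}^m$, $f_x(D)=\inf_{\alpha\in\mathbb{R}^d}\tfrac12\|x-D\alpha\|_2^2+g(\alpha)$. For $\epsilon>0$, $\mathfrak{A}_\epsilon(X,D)$ is the set of matrices $A=[\alpha_1,\dots,\alpha_n]\in\mathbb{R}^{d\times n}$ with $\tfrac12\|x_i-D\alpha_i\|_2^2+g(\alpha_i)\le f_{x_i}(D)+\epsilon$ for all $i$. For a matrix $M$ with columns $m_i$, $\|M\|=\|M\|_{1\to2}=\max_i\|m_i\|_2$, and $\|M\|_\star=\sup_{\|U\|_{1\to2}\le1}\langle M,U\rangle_F$ is its dual norm with respect to the Frobenius inner product. For $0<p<1$, $\|\cdot\|_p$ is the $\ell_p$ quasi-norm. *)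

theory Defs
  imports "HOL-Analysis.Analysis"
begin

text \<open>Vectors in R^k are modelled as real^'k, matrices in R^(r x c) as real^'c^'r
  (rows indexed by 'r). Columns are obtained via column.\<close>

definition lp_norm :: "real \<Rightarrow> real^'d \<Rightarrow> real" where
  "lp_norm p v = (\<Sum>j\<in>UNIV. \<bar>v $ j\<bar> powr p) powr (1 / p)"

definition l1_norm :: "real^'d \<Rightarrow> real" where
  "l1_norm v = (\<Sum>j\<in>UNIV. \<bar>v $ j\<bar>)"

definition penalty :: "real \<Rightarrow> real \<Rightarrow> real \<Rightarrow> real^'d \<Rightarrow> real" where
  "penalty p q lam \<alpha> = (lp_norm p ((1 / lam) *\<^sub>R \<alpha>)) powr q"

definition fval :: "(real^'d \<Rightarrow> real) \<Rightarrow> real^'m \<Rightarrow> real^'d^'m \<Rightarrow> real" where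
  "fval g x D = Inf ((\<lambda>\<alpha>. (1/2) * (norm (x - D *v \<alpha>))\<^sup>2 + g \<alpha>) ` UNIV)"

definition approx_set :: "(real^'d \<Rightarrow> real) \<Rightarrow> real \<Rightarrow> real^'n^'m \<Rightarrow> real^'d^'m \<Rightarrow> (real^'n^'d) set" where
  "approx_set g \<epsilon> X D = {A. \<forall>i. (1/2) * (norm (column i X - D *v column i A))\<^sup>2 + g (column i A)
        \<le> fval g (column i X) D + \<epsilon>}"

definition norm12 :: "real^'c^'r \<Rightarrow> real" where
  "norm12 M = Max (range (\<lambda>j. norm (column j M)))"

definition frob_inner :: "real^'c^'r \<Rightarrow> real^'c^'r \<Rightarrow> real" where
  "frob_inner M U = (\<Sum>i\<in>UNIV. \<Sum>j\<in>UNIV. M $ i $ j * U $ i $ j)"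

definition dual_norm12 :: "real^'c^'r \<Rightarrow> real" where
  "dual_norm12 M = Sup (frob_inner M ` {U. norm12 U \<le> 1})"

definition LX :: "(real^'d \<Rightarrow> real) \<Rightarrow> real^'n^'m \<Rightarrow> real^'d^'m \<Rightarrow> ereal" where
  "LX g X D = (INF \<epsilon>\<in>{0<..}. SUP A\<in>approx_set g \<epsilon> X D.
      ereal (dual_norm12 ((X - D ** A) ** transpose A) / real CARD('n)))"

definition CX :: "(real^'d \<Rightarrow> real) \<Rightarrow> real^'n^'m \<Rightarrow> real^'d^'m \<Rightarrow> ereal" where
  "CX g X D = (INF \<epsilon>\<in>{0<..}. SUP A\<in>approx_set g \<epsilon> X D.
      ereal (1 / (2 * real CARD('n)) * (\<Sum>i\<in>UNIV. (l1_norm (column i A))\<^sup>2)))"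

end

theory Submission
  imports Defs
begin

text \<open>Comparing an \<open>\<epsilon>\<close>-approximate minimiser with the trivial code \<open>\<alpha> = 0\<close> gives
  \<open>\<parallel>x - D\<alpha>\<parallel>\<^sup>2/2 + g \<alpha> \<le> \<parallel>x\<parallel>\<^sup>2/2 + \<epsilon>\<close>, a bound that does not involve \<open>D\<close>.
  It controls the residual \<open>x - D\<alpha>\<close> and the penalty \<open>g \<alpha>\<close>; since the \<open>\<ell>\<^sub>p\<close> quasi-norm
  dominates every coordinate, the latter bounds every entry of \<open>\<alpha>\<close>. Both matrices in
  \<open>L\<^sub>X\<close> and \<open>C\<^sub>X\<close> are therefore entrywise bounded uniformly in \<open>D\<close>, and on a
  finite-dimensional space the dual norm is bounded by the number of entries times
  their maximal absolute value.\<close>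

lemma penalty_zero [simp]: "penalty p q lam 0 = 0"
  by (simp add: penalty_def lp_norm_def)

lemma penalty_nonneg: "penalty p q lam a \<ge> 0"
  by (simp add: penalty_def)

lemma abs_nth_le_lp_norm:
  assumes "p > 0"
  shows "\<bar>v $ j\<bar> \<le> lp_norm p v"
proof -
  have "\<bar>v $ j\<bar> = (\<bar>v $ j\<bar> powr p) powr (1/p)"
    using assms by (simp add: powr_powr)
  also have "\<dots> \<le> (\<Sum>k\<in>UNIV. \<bar>v $ k\<bar> powr p) powr (1/p)"
    using assms by (intro powr_mono2) (auto intro: member_le_sum)
  finally show ?thesis by (simp add: lp_norm_def)
qed

lemma abs_nth_le_of_penalty_le:
  assumes "p > 0" and "q > 0" and "lam > 0" and "penalty p q lam a \<le> R"
  shows "\<bar>a $ j\<bar> \<le> lam * R powr (1/q)"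
proof -
  define v where "v = (1/lam) *\<^sub>R a"
  have "\<bar>v $ j\<bar> \<le> lp_norm p v"
    using assms(1) by (rule abs_nth_le_lp_norm)
  also have "\<dots> = (lp_norm p v powr q) powr (1/q)"
    using assms(2) by (simp add: powr_powr lp_norm_def)
  also have "\<dots> \<le> R powr (1/q)"
    using assms(2,4) by (intro powr_mono2) (auto simp: penalty_def v_def)
  finally have "\<bar>v $ j\<bar> \<le> R powr (1/q)" .
  moreover have "\<bar>a $ j\<bar> = lam * \<bar>v $ j\<bar>"
    using assms(3) by (simp add: v_def abs_mult)
  ultimately show ?thesis
    using assms(3) by simp
qed

lemma fval_le_half_norm_sq:
  assumes "\<And>a. g a \<ge> 0" and "g 0 = 0"
  shows "fval g x D \<le> (norm x)\<^sup>2 / 2"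
proof -
  have "bdd_below ((\<lambda>\<alpha>. (1/2) * (norm (x - D *v \<alpha>))\<^sup>2 + g \<alpha>) ` UNIV)"
    by (rule bdd_belowI[where m=0]) (auto intro: add_nonneg_nonneg assms)
  then have "fval g x D \<le> (1/2) * (norm (x - D *v 0))\<^sup>2 + g 0"
    unfolding fval_def by (rule cInf_lower[OF rangeI])
  then show ?thesis
    using assms by simp
qed

lemma approx_set_column_bound:
  assumes "\<And>a. g a \<ge> 0" and "g 0 = 0" and "A \<in> approx_set g \<epsilon> X D"
  shows "(norm (column i X - D *v column i A))\<^sup>2 / 2 + g (column i A)
           \<le> (norm (column i X))\<^sup>2 / 2 + \<epsilon>"
proof -
  have "(1/2) * (norm (column i X - D *v column i A))\<^sup>2 + g (column i A)
          \<le> fval g (column i X) D + \<epsilon>"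
    using assms(3) unfolding approx_set_def by blast
  then show ?thesis
    using fval_le_half_norm_sq[of g, OF assms(1,2), of "column i X" D] by linarith
qed

lemma column_diff_matrix_mult:
  "column i (X - D ** A) = column i X - D *v column i A"
  unfolding column_def matrix_vector_mult_def matrix_matrix_mult_def
  by (simp add: vec_eq_iff)

lemma approx_set_penalty_entry_bounds:
  fixes X :: "real^'n^'m" and A :: "real^'n^'d"
  defines "S \<equiv> \<Sum>i\<in>UNIV. (norm (column i X))\<^sup>2"
  assumes "p > 0" and "q > 0" and "lam > 0"
    and A: "A \<in> approx_set (penalty p q lam) \<epsilon> X D"
  shows "\<bar>A $ j $ i\<bar> \<le> lam * (S / 2 + \<epsilon>) powr (1/q)"
    and "\<bar>(X - D ** A) $ k $ i\<bar> \<le> sqrt (S + 2 * \<epsilon>)"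
proof -
  have col: "(norm (column i X))\<^sup>2 \<le> S"
    unfolding S_def by (rule member_le_sum) auto
  note bound = approx_set_column_bound[OF penalty_nonneg penalty_zero A, of i]
  have "penalty p q lam (column i A) \<le> S / 2 + \<epsilon>"
    using bound col zero_le_power2[of "norm (column i X - D *v column i A)"] by linarith
  then have "\<bar>column i A $ j\<bar> \<le> lam * (S / 2 + \<epsilon>) powr (1/q)"
    by (rule abs_nth_le_of_penalty_le[OF assms(2-4)])
  then show "\<bar>A $ j $ i\<bar> \<le> lam * (S / 2 + \<epsilon>) powr (1/q)"
    by (simp add: column_def)
  have "(norm (column i (X - D ** A)))\<^sup>2 \<le> S + 2 * \<epsilon>"
    using bound col penalty_nonneg[of p q lam "column i A"]
    by (simp add: column_diff_matrix_mult)
  then have "norm (column i (X - D ** A)) \<le> sqrt (S + 2 * \<epsilon>)"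
    by (simp add: real_le_rsqrt)
  moreover have "\<bar>(X - D ** A) $ k $ i\<bar> \<le> norm (column i (X - D ** A))"
    using component_le_norm_cart[of "column i (X - D ** A)" k] by (simp add: column_def)
  ultimately show "\<bar>(X - D ** A) $ k $ i\<bar> \<le> sqrt (S + 2 * \<epsilon>)"
    by linarith
qed

lemma abs_entry_le_norm12:
  fixes U :: "real^'c^'r"
  shows "\<bar>U $ k $ j\<bar> \<le> norm12 U"
proof -
  have "\<bar>U $ k $ j\<bar> = \<bar>column j U $ k\<bar>"
    by (simp add: column_def)
  also have "\<dots> \<le> norm (column j U)"
    by (rule component_le_norm_cart)
  also have "\<dots> \<le> norm12 U"
    unfolding norm12_def by (rule Max_ge) auto
  finally show ?thesis .
qed

lemma dual_norm12_le_entry_bound: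
  fixes M :: "real^'c^'r"
  assumes "\<And>k j. \<bar>M $ k $ j\<bar> \<le> B"
  shows "dual_norm12 M \<le> real CARD('r) * real CARD('c) * B"
  unfolding dual_norm12_def
proof (rule cSup_least)
  have "column j (0::real^'c^'r) = 0" for j
    by (simp add: column_def vec_eq_iff)
  then have "norm12 (0::real^'c^'r) \<le> 1"
    by (simp add: norm12_def)
  then show "frob_inner M ` {U. norm12 U \<le> 1} \<noteq> {}"
    by auto
next
  fix y assume "y \<in> frob_inner M ` {U. norm12 U \<le> 1}"
  then obtain U where U: "norm12 U \<le> 1" and y: "y = frob_inner M U"
    by auto
  have "M $ i $ j * U $ i $ j \<le> B" for i j
  proof -
    have "M $ i $ j * U $ i $ j \<le> \<bar>M $ i $ j\<bar> * \<bar>U $ i $ j\<bar>"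
      by (simp add: abs_mult[symmetric])
    also have "\<dots> \<le> B * 1"
      using abs_entry_le_norm12[of U i j] U order_trans[OF abs_ge_zero assms]
      by (intro mult_mono assms) auto
    finally show ?thesis by simp
  qed
  then have "y \<le> (\<Sum>i\<in>(UNIV::'r set). \<Sum>j\<in>(UNIV::'c set). B)"
    unfolding y frob_inner_def by (intro sum_mono)
  then show "y \<le> real CARD('r) * real CARD('c) * B"
    by simp
qed

lemma abs_mult_transpose_entry_le:
  fixes M :: "real^'n^'m" and N :: "real^'n^'d"
  assumes "\<And>k i. \<bar>M $ k $ i\<bar> \<le> a" and "\<And>j i. \<bar>N $ j $ i\<bar> \<le> b"
  shows "\<bar>(M ** transpose N) $ k $ j\<bar> \<le> real CARD('n) * a * b"
proof -
  have "\<bar>(M ** transpose N) $ k $ j\<bar> = \<bar>\<Sum>i\<in>UNIV. M $ k $ i * N $ j $ i\<bar>"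
    by (simp add: matrix_matrix_mult_def transpose_def)
  also have "\<dots> \<le> (\<Sum>i\<in>UNIV. \<bar>M $ k $ i * N $ j $ i\<bar>)"
    by (rule sum_abs)
  also have "\<dots> \<le> (\<Sum>i\<in>(UNIV::'n set). a * b)"
  proof (rule sum_mono)
    fix i
    have "\<bar>M $ k $ i\<bar> * \<bar>N $ j $ i\<bar> \<le> a * b"
      using order_trans[OF abs_ge_zero assms(1)] by (intro mult_mono assms) auto
    then show "\<bar>M $ k $ i * N $ j $ i\<bar> \<le> a * b"
      by (simp only: abs_mult)
  qed
  finally show ?thesis
    by simp
qed

lemma l1_norm_le_entry_bound:
  assumes "\<And>j. \<bar>v $ j\<bar> \<le> a"
  shows "l1_norm (v :: real^'d) \<le> real CARD('d) * a"
proof -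
  have "l1_norm v \<le> (\<Sum>j\<in>(UNIV::'d set). a)"
    unfolding l1_norm_def using assms by (intro sum_mono)
  then show ?thesis
    by simp
qed

lemma inf_sup_le_ereal:
  assumes "\<epsilon> > 0" and "\<And>A. A \<in> S \<epsilon> \<Longrightarrow> f A \<le> c"
  shows "(INF \<epsilon>\<in>{0<..}. SUP A\<in>S \<epsilon>. ereal (f A)) \<le> ereal c"
proof -
  have "(INF \<epsilon>\<in>{0<..}. SUP A\<in>S \<epsilon>. ereal (f A)) \<le> (SUP A\<in>S \<epsilon>. ereal (f A))"
    using assms(1) by (intro INF_lower) auto
  also have "\<dots> \<le> ereal c"
    using assms(2) by (intro SUP_least) simp
  finally show ?thesis .
qed

lemma LX_le_of_entry_bounds:
  fixes X :: "real^'n^'m" and D :: "real^'d^'m"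
  assumes "\<epsilon> > 0" and "r \<ge> 0" and "a \<ge> 0"
    and "\<And>A j i. A \<in> approx_set g \<epsilon> X D \<Longrightarrow> \<bar>A $ j $ i\<bar> \<le> a"
    and "\<And>A k i. A \<in> approx_set g \<epsilon> X D \<Longrightarrow> \<bar>(X - D ** A) $ k $ i\<bar> \<le> r"
  shows "LX g X D \<le> ereal (real CARD('m) * real CARD('d) * r * a)"
  unfolding LX_def
proof (rule inf_sup_le_ereal[OF assms(1)])
  fix A assume A: "A \<in> approx_set g \<epsilon> X D"
  have "dual_norm12 ((X - D ** A) ** transpose A)
          \<le> real CARD('m) * real CARD('d) * (real CARD('n) * r * a)"
    by (intro dual_norm12_le_entry_bound abs_mult_transpose_entry_le assms(4,5)[OF A])
  then show "dual_norm12 ((X - D ** A) ** transpose A) / real CARD('n)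
               \<le> real CARD('m) * real CARD('d) * r * a"
    by (simp add: divide_le_eq mult_ac)
qed

lemma CX_le_of_entry_bound:
  fixes X :: "real^'n^'m" and D :: "real^'d^'m"
  assumes "\<epsilon> > 0" and "a \<ge> 0"
    and "\<And>A j i. A \<in> approx_set g \<epsilon> X D \<Longrightarrow> \<bar>A $ j $ i\<bar> \<le> a"
  shows "CX g X D \<le> ereal ((real CARD('d) * a)\<^sup>2 / 2)"
  unfolding CX_def
proof (rule inf_sup_le_ereal[OF assms(1)])
  fix A assume A: "A \<in> approx_set g \<epsilon> X D"
  have "(l1_norm (column i A))\<^sup>2 \<le> (real CARD('d) * a)\<^sup>2" for i
  proof (rule power_mono)
    show "l1_norm (column i A) \<le> real CARD('d) * a"
      using assms(3)[OF A] by (intro l1_norm_le_entry_bound) (simp add: column_def)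
  qed (simp add: l1_norm_def sum_nonneg)
  then have "(\<Sum>i\<in>UNIV. (l1_norm (column i A))\<^sup>2) \<le> real CARD('n) * (real CARD('d) * a)\<^sup>2"
    using sum_mono[of UNIV "\<lambda>i. (l1_norm (column i A))\<^sup>2" "\<lambda>_. (real CARD('d) * a)\<^sup>2"]
    by simp
  then show "1 / (2 * real CARD('n)) * (\<Sum>i\<in>UNIV. (l1_norm (column i A))\<^sup>2)
               \<le> (real CARD('d) * a)\<^sup>2 / 2"
    by (simp add: field_simps)
qed

theorem proposition2:
  fixes p q lam :: real and X :: "real^'n^'m"
  assumes "p > 0" and "q > 0" and "lam > 0"
  shows "\<exists>Lc Cc :: real. \<forall>D :: real^'d^'m.
           LX (penalty p q lam) X D \<le> ereal Lc \<and> CX (penalty p q lam) X D \<le> ereal Cc"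
proof -
  define S where "S = (\<Sum>i\<in>UNIV. (norm (column i X))\<^sup>2)"
  define a where "a = lam * (S / 2 + 1) powr (1/q)"
  define r where "r = sqrt (S + 2)"
  have "S \<ge> 0"
    by (simp add: S_def sum_nonneg)
  then have "a \<ge> 0" and "r \<ge> 0"
    using assms(3) by (simp_all add: a_def r_def)
  have entry_bounds: "\<bar>A $ j $ i\<bar> \<le> a" "\<bar>(X - D ** A) $ k $ i\<bar> \<le> r"
    if "A \<in> approx_set (penalty p q lam) 1 X D" for A :: "real^'n^'d" and D j k i
    using approx_set_penalty_entry_bounds[OF assms that]
    by (simp_all add: a_def r_def S_def)
  have "LX (penalty p q lam) X D \<le> ereal (real CARD('m) * real CARD('d) * r * a)
          \<and> CX (penalty p q lam) X D \<le> ereal ((real CARD('d) * a)\<^sup>2 / 2)"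
    for D :: "real^'d^'m"
    using \<open>r \<ge> 0\<close> \<open>a \<ge> 0\<close> entry_bounds
    by (intro conjI LX_le_of_entry_bounds[where \<epsilon>=1] CX_le_of_entry_bound[where \<epsilon>=1]) auto
  then show ?thesis
    by blast
qed

end
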